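(* (a) For every integer $i\ge 1$ and every integer $m\ge i+1$, $$d_i^2(m)\bigl(d_i^2(m)-d_i(m-1)d_i(m+1)\bigr)>d_i^2(m-1)\bigl(d_i^2(m+1)-d_i(m)d_i(m+2)\bigr).$$ (b) For $i=0$ the reverse strict inequality holds: for every integer $m\ge 1$, $$d_0^2(m)\bigl(d_0^2(m)-d_0(m-1)d_0(m+1)\bigr)<d_0^2(m-1)\bigl(d_0^2(m+1)-d_0(m)d_0(m+2)\bigr).$$
   Context: For integers $m\ge 0$ and $0\le i\le m$, the Boros–Moll numbers are $$d_i(m)=2^{-2m}\sum_{k=i}^{m}2^k\binom{2m-2k}{m-k}\binom{m+k}{k}\binom{k}{i}.$$ *)

theory Defs
  imports Complex_Main
begin

definition boros_moll :: "nat \<Rightarrow> nat \<Rightarrow> real" where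
  "boros_moll i m = (\<Sum>k=i..m. 2 ^ k * real ((2*m - 2*k) choose (m - k))
      * real ((m + k) choose k) * real (k choose i)) / 2 ^ (2*m)"

end

theory Submission
  imports Defs
begin

text \<open>
  The numbers d_i(m) satisfy Moll's three-term recurrence
  C_i(m) d_i(m+2) = A_i(m) d_i(m+1) - B_i(m) d_i(m), which follows by Wilf--Zeilberger telescoping
  over the summands. For i = 0 it collapses to d_0(m+1) / d_0(m) = (4m+3)/(2m+2), and (b) becomes an
  inequality between rational functions of m.

  For i \<ge> 1, eliminating d_i(m+1) and d_i(m+2) with the recurrence turns C_i(m) C_i(m-1)^2 times
  the difference of the two sides into a binary quartic form in (d_i(m), d_i(m-1)). Induction along
  the recurrence gives the lower bound d_i(m) / d_i(m-1) \<ge> L_i(m) for an explicit rational L_i, and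
  the quartic form is positive on that range: in the variables j = i - 1, p = m - i - 1 and the excess
  s of the ratio over L_i(m) it expands into a polynomial with positive coefficients.
\<close>

lemma central_binomial_Suc:
  "Suc q * (2 * Suc q choose Suc q) = 2 * (2 * q + 1) * (2 * q choose q)"
proof -
  have "2 * Suc q = Suc (2*q+1)" by simp
  then have a: "Suc q * (2 * Suc q choose Suc q) = 2 * Suc q * ((2*q+1) choose q)"
    using Suc_times_binomial[of q "2*q+1"] by simp
  have b: "Suc q * ((2*q+1) choose q) = (2*q+1) * (2*q choose q)"
    using binomial_absorb_comp[of "2*q+1" q] by (simp add: Suc_diff_le)
  have "Suc q * (Suc q * (2 * Suc q choose Suc q)) = Suc q * (2 * Suc q * ((2*q+1) choose q))"
    by (simp only: a)
  also have "\<dots> = 2 * Suc q * (Suc q * ((2*q+1) choose q))"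
    by (simp only: ac_simps)
  also have "\<dots> = 2 * Suc q * ((2*q+1) * (2*q choose q))"
    by (simp only: b)
  also have "\<dots> = Suc q * (2 * (2*q+1) * (2*q choose q))"
    by (simp only: ac_simps)
  finally show ?thesis by (simp only: mult_cancel1 nat.distinct simp_thms)
qed

lemma Suc_times_binomial_add_left:
  "Suc n * (Suc n + k choose k) = (Suc n + k) * (n + k choose k)"
  using binomial_absorb_comp[of "Suc n + k" k] by simp

lemma real_binomial_absorb_comp:
  "(real n - real k) * real (n choose k) = real n * real ((n - 1) choose k)"
proof (cases "k \<le> n")
  case True
  then show ?thesis using binomial_absorb_comp[of n k] by (metis of_nat_diff of_nat_mult)
next
  case False
  then show ?thesis by (simp add: binomial_eq_0)
qed

text \<open>The k-th summand of d_i(m). The guard k \<le> m is needed because for k > m the truncated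
  subtraction would turn the first binomial coefficient into 0 choose 0 = 1.\<close>

definition bm_term :: "nat \<Rightarrow> nat \<Rightarrow> nat \<Rightarrow> real" where
  "bm_term i m k = (if k \<le> m then 2 ^ k * real ((2*m - 2*k) choose (m - k))
      * real ((m + k) choose k) * real (k choose i) / 4 ^ m else 0)"

lemma boros_moll_eq_sum_bm_term_atLeastAtMost:
  "boros_moll i m = (\<Sum>k=i..m. bm_term i m k)"
  by (simp add: boros_moll_def bm_term_def sum_divide_distrib power_mult)

lemma boros_moll_eq_sum_bm_term:
  assumes "m < N"
  shows "boros_moll i m = (\<Sum>k<N. bm_term i m k)"
proof -
  have "(\<Sum>k<N. bm_term i m k) = (\<Sum>k\<le>m. bm_term i m k)"
    using assms by (intro sum.mono_neutral_right) (auto simp: bm_term_def)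
  also have "\<dots> = (\<Sum>k=i..m. bm_term i m k)"
    by (intro sum.mono_neutral_right) (auto simp: bm_term_def binomial_eq_0)
  finally show ?thesis
    by (simp add: boros_moll_eq_sum_bm_term_atLeastAtMost)
qed

lemma bm_term_Suc_upper:
  "2 * (real m + 1 - real k) * (real m + 1) * bm_term i (Suc m) k
     = (2 * real m - 2 * real k + 1) * (real m + real k + 1) * bm_term i m k"
proof (cases "k \<le> m")
  case True
  then obtain q where m: "m = k + q" using le_Suc_ex by blast
  define C0 where "C0 = real (2 * q choose q)"
  define C1 where "C1 = real (2 * Suc q choose Suc q)"
  define D0 where "D0 = real (m + k choose k)"
  define D1 where "D1 = real (Suc m + k choose k)"
  define E where "E = real (k choose i)"
  have t0: "bm_term i m k = 2 ^ k * C0 * D0 * E / 4 ^ m"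
    using True by (simp add: bm_term_def C0_def D0_def E_def m mult_2)
  have "2 * Suc m - 2 * k = 2 * Suc q" "Suc m - k = Suc q" by (simp_all add: m)
  then have t1: "bm_term i (Suc m) k = 2 ^ k * C1 * D1 * E / 4 ^ Suc m"
    using True unfolding bm_term_def C1_def D1_def E_def by simp
  have c: "real (Suc q) * C1 = 2 * (2 * real q + 1) * C0"
    unfolding C0_def C1_def using arg_cong[OF central_binomial_Suc, of real]
    by (simp only: of_nat_mult of_nat_add of_nat_numeral of_nat_1)
  have d: "real (Suc m) * D1 = (real m + real k + 1) * D0"
    unfolding D0_def D1_def using arg_cong[OF Suc_times_binomial_add_left[of m k], of real]
    by (simp only: of_nat_mult of_nat_add of_nat_1 of_nat_Suc) (simp add: algebra_simps)
  have "2 * (real m + 1 - real k) * (real m + 1) * bm_term i (Suc m) k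
      = (real (Suc q) * C1) * (real (Suc m) * D1) * 2 ^ k * E / (2 * 4 ^ m)"
    unfolding t1 by (simp add: m field_simps)
  also have "\<dots> = (2 * real m - 2 * real k + 1) * (real m + real k + 1) * bm_term i m k"
    unfolding c d t0 by (simp add: m field_simps)
  finally show ?thesis .
next
  case False
  then show ?thesis by (cases "k = Suc m") (auto simp: bm_term_def)
qed

lemma bm_term_Suc_Suc:
  "2 * (real m + 1) * (real k + 1 - real i) * bm_term i (Suc m) (Suc k)
     = (real m + real k + 1) * (real m + real k + 2) * bm_term i m k"
proof (cases "k \<le> m")
  case True
  then obtain q where m: "m = k + q" using le_Suc_ex by blast
  define C where "C = real (2 * q choose q)"
  define D0 where "D0 = real (m + k choose k)"
  define D1 where "D1 = real (Suc m + k choose k)"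
  define D2 where "D2 = real (Suc (Suc m + k) choose Suc k)"
  define E0 where "E0 = real (k choose i)"
  define E1 where "E1 = real (Suc k choose i)"
  have t0: "bm_term i m k = 2 ^ k * C * D0 * E0 / 4 ^ m"
    using True by (simp add: bm_term_def C_def D0_def E0_def m mult_2)
  have "2 * Suc m - 2 * Suc k = 2 * q" "Suc m - Suc k = q" "Suc m + Suc k = Suc (Suc m + k)"
    by (simp_all add: m)
  then have t1: "bm_term i (Suc m) (Suc k) = 2 ^ Suc k * C * D2 * E1 / 4 ^ Suc m"
    using True unfolding bm_term_def C_def D2_def E1_def by simp
  have d2: "real (Suc k) * D2 = (real m + real k + 2) * D1"
    unfolding D1_def D2_def using arg_cong[OF Suc_times_binomial[of k "Suc m + k"], of real]
    by (simp only: of_nat_mult of_nat_add of_nat_1 of_nat_Suc)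
      (simp add: algebra_simps del: binomial_Suc_Suc)
  have d1: "real (Suc m) * D1 = (real m + real k + 1) * D0"
    unfolding D0_def D1_def using arg_cong[OF Suc_times_binomial_add_left[of m k], of real]
    by (simp only: of_nat_mult of_nat_add of_nat_1 of_nat_Suc) (simp add: algebra_simps)
  have e: "(real k + 1 - real i) * E1 = real (Suc k) * E0"
    unfolding E0_def E1_def using real_binomial_absorb_comp[of "Suc k" i] by (simp add: ac_simps)
  have "2 * (real m + 1) * (real k + 1 - real i) * bm_term i (Suc m) (Suc k)
      = (real (Suc m) * ((real k + 1 - real i) * E1 * D2)) * 2 ^ k * C / 4 ^ m"
    by (simp add: t1 field_simps)
  also have "\<dots> = (real m + real k + 1) * (real m + real k + 2) * bm_term i m k"
  proof -
    have "real (Suc m) * ((real k + 1 - real i) * E1 * D2)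
        = (real m + real k + 1) * (real m + real k + 2) * D0 * E0"
      by (metis d1 d2 e mult.assoc mult.commute mult.left_commute)
    then show ?thesis by (simp add: t0 field_simps)
  qed
  finally show ?thesis .
next
  case False
  then show ?thesis by (simp add: bm_term_def)
qed

definition rec_A :: "real \<Rightarrow> real \<Rightarrow> real" where
  "rec_A i n = 2 * (n + 1) * (8 * n^2 + 24 * n + 19 - 4 * i^2)"
definition rec_B :: "real \<Rightarrow> real \<Rightarrow> real" where
  "rec_B i n = (n + i + 1) * (4 * n + 3) * (4 * n + 5)"
definition rec_C :: "real \<Rightarrow> real \<Rightarrow> real" where
  "rec_C i n = 4 * (n + 1) * (n + 2) * (n + 2 - i)"

definition wz_poly :: "real \<Rightarrow> real \<Rightarrow> real \<Rightarrow> real" where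
  "wz_poly n i k = 16 - 28*k + 16*k^2 + 16*i + 8*i*k - 8*i*k^2 + 56*n - 68*n*k + 24*n*k^2
     + 40*n*i + 8*n*i*k - 8*n*i*k^2 + 72*n^2 - 56*n^2*k + 8*n^2*k^2 + 32*n^2*i + 40*n^3
     - 16*n^3*k + 8*n^3*i + 8*n^4"

lemma wz_rational_identity:
  fixes n i k t0 t1 t2 :: real
  defines "a1 \<equiv> 2*n - 2*k + 1" and "a3 \<equiv> 2*n - 2*k + 3"
    and "b1 \<equiv> n + k + 1" and "b2 \<equiv> n + k + 2"
  assumes nz: "a1 \<noteq> 0" "a3 \<noteq> 0" "b1 \<noteq> 0" "b2 \<noteq> 0"
    and t1: "a3 * b2 * t1 = 2 * (n + 2 - k) * (n + 2) * t2"
    and t0: "a1 * b1 * t0 = 2 * (n + 1 - k) * (n + 1) * t1"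
  shows "rec_C i n * t2 - rec_A i n * t1 + rec_B i n * t0
    = wz_poly n i (k + 1) / a1 * t1 - 2 * (n + 2) * (k - i) * wz_poly n i k / (b1 * b2 * a3) * t2"
proof -
  have t1': "t1 = 2 * (n + 2 - k) * (n + 2) / (a3 * b2) * t2"
    using t1 nz by (simp add: eq_divide_eq ac_simps)
  have t0': "t0 = 2 * (n + 1 - k) * (n + 1) / (a1 * b1) * t1"
    using t0 nz by (simp add: eq_divide_eq ac_simps)
  show ?thesis
    unfolding t0' t1' using nz
    by (simp add: field_simps)
      (unfold a1_def a3_def b1_def b2_def rec_A_def rec_B_def rec_C_def wz_poly_def, algebra)
qed

lemma odd_neq_even_real:
  "2 * real a + 1 \<noteq> 2 * real b"
proof
  assume "2 * real a + 1 = 2 * real b"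
  then have "real (2 * a + 1) = real (2 * b)" by simp
  then have "2 * a + 1 = 2 * b" by (simp only: of_nat_eq_iff)
  then show False by presburger
qed

text \<open>The certificate comes from Zeilberger's algorithm. It is written as a rational multiple of the
  summand of d_i(n+2) rather than of d_i(n+1): its denominators are then nonzero for every k, so the
  telescoping identity needs no boundary cases.\<close>

definition wz_cert :: "nat \<Rightarrow> nat \<Rightarrow> nat \<Rightarrow> real" where
  "wz_cert i n k = 2 * (real n + 2) * (real k - real i) * wz_poly (real n) (real i) (real k)
     / ((real n + real k + 1) * (real n + real k + 2) * (2 * real n - 2 * real k + 3))
     * bm_term i (n + 2) k"

lemma wz_cert_Suc:
  "wz_cert i n (Suc k)
     = wz_poly (real n) (real i) (real k + 1) / (2 * real n - 2 * real k + 1) * bm_term i (n + 1) k"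
proof -
  define P where "P = wz_poly (real n) (real i) (real k + 1)"
  define Q where "Q = (real n + real k + 2) * (real n + real k + 3)"
  define T where "T = bm_term i (n + 2) (Suc k)"
  define S where "S = bm_term i (n + 1) k"
  have TS: "2 * (real n + 2) * (real k + 1 - real i) * T = Q * S"
    unfolding Q_def T_def S_def using bm_term_Suc_Suc[of "n + 1" k i] by (simp add: algebra_simps)
  have Q: "Q \<noteq> 0" unfolding Q_def by (simp add: add_pos_nonneg)
  have "wz_cert i n (Suc k)
      = P / (Q * (2 * real n - 2 * real k + 1)) * (2 * (real n + 2) * (real k + 1 - real i) * T)"
    by (simp add: wz_cert_def P_def Q_def T_def algebra_simps)
  also have "\<dots> = P / (2 * real n - 2 * real k + 1) * S"
    unfolding TS using Q by simp
  finally show ?thesis by (simp only: P_def S_def)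
qed

lemma bm_term_wz_telescoping:
  "rec_C (real i) (real n) * bm_term i (n + 2) k - rec_A (real i) (real n) * bm_term i (n + 1) k
     + rec_B (real i) (real n) * bm_term i n k = wz_cert i n (Suc k) - wz_cert i n k"
proof -
  define t0 where "t0 = bm_term i n k"
  define t1 where "t1 = bm_term i (n + 1) k"
  define t2 where "t2 = bm_term i (n + 2) k"
  have h1: "(2 * real n - 2 * real k + 3) * (real n + real k + 2) * t1
      = 2 * (real n + 2 - real k) * (real n + 2) * t2"
    unfolding t1_def t2_def using bm_term_Suc_upper[of "n + 1" k i] by (simp add: algebra_simps)
  have h0: "(2 * real n - 2 * real k + 1) * (real n + real k + 1) * t0
      = 2 * (real n + 1 - real k) * (real n + 1) * t1"
    unfolding t0_def t1_def using bm_term_Suc_upper[of n k i] by (simp add: algebra_simps)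
  have nz: "2 * real n - 2 * real k + 1 \<noteq> 0" "2 * real n - 2 * real k + 3 \<noteq> 0"
    "real n + real k + 1 \<noteq> 0" "real n + real k + 2 \<noteq> 0"
    using odd_neq_even_real[of n k] odd_neq_even_real[of "n + 1" k]
    by (auto simp: algebra_simps add_nonneg_eq_0_iff)
  have "rec_C (real i) (real n) * t2 - rec_A (real i) (real n) * t1 + rec_B (real i) (real n) * t0
      = wz_poly (real n) (real i) (real k + 1) / (2 * real n - 2 * real k + 1) * t1
        - 2 * (real n + 2) * (real k - real i) * wz_poly (real n) (real i) (real k)
          / ((real n + real k + 1) * (real n + real k + 2) * (2 * real n - 2 * real k + 3)) * t2"
    using nz h1 h0 by (rule wz_rational_identity)
  then show ?thesis
    unfolding wz_cert_Suc unfolding wz_cert_def t0_def t1_def t2_def .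
qed

theorem boros_moll_recurrence:
  "rec_C (real i) (real n) * boros_moll i (n + 2)
     = rec_A (real i) (real n) * boros_moll i (n + 1) - rec_B (real i) (real n) * boros_moll i n"
proof -
  have sums: "boros_moll i (n + 2) = (\<Sum>k<n + 3. bm_term i (n + 2) k)"
    "boros_moll i (n + 1) = (\<Sum>k<n + 3. bm_term i (n + 1) k)"
    "boros_moll i n = (\<Sum>k<n + 3. bm_term i n k)"
    by (simp_all add: boros_moll_eq_sum_bm_term)
  have "rec_C (real i) (real n) * boros_moll i (n + 2) - rec_A (real i) (real n) * boros_moll i (n + 1)
      + rec_B (real i) (real n) * boros_moll i n
      = (\<Sum>k<n + 3. rec_C (real i) (real n) * bm_term i (n + 2) k
          - rec_A (real i) (real n) * bm_term i (n + 1) k + rec_B (real i) (real n) * bm_term i n k)"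
    unfolding sums by (simp only: sum.distrib sum_subtractf sum_distrib_left)
  also have "\<dots> = (\<Sum>k<n + 3. wz_cert i n (Suc k) - wz_cert i n k)"
    by (simp only: bm_term_wz_telescoping)
  also have "\<dots> = wz_cert i n (n + 3) - wz_cert i n 0"
    by (rule sum_lessThan_telescope)
  also have "\<dots> = 0"
    by (cases i) (simp_all add: wz_cert_def bm_term_def)
  finally show ?thesis by simp
qed

lemma boros_moll_pos:
  assumes "i \<le> m"
  shows "0 < boros_moll i m"
  unfolding boros_moll_def using assms
  by (intro divide_pos_pos sum_pos2[where i = m]) auto

lemma boros_moll_diag_Suc:
  "2 * (real i + 1) * boros_moll i (Suc i) = (2 * real i + 1) * (2 * real i + 3) * boros_moll i i"
proof -
  have "boros_moll i i = bm_term i i i"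
    "boros_moll i (Suc i) = bm_term i (Suc i) i + bm_term i (Suc i) (Suc i)"
    by (simp_all add: boros_moll_eq_sum_bm_term_atLeastAtMost)
  moreover have "2 * (real i + 1) * bm_term i (Suc i) i = (2 * real i + 1) * bm_term i i i"
    using bm_term_Suc_upper[of i i i] by simp
  moreover have "2 * (real i + 1) * bm_term i (Suc i) (Suc i)
      = (2 * real i + 1) * (2 * real i + 2) * bm_term i i i"
    using bm_term_Suc_Suc[of i i i] by (simp add: algebra_simps)
  ultimately show ?thesis by (simp add: algebra_simps)
qed

lemma boros_moll_0_Suc:
  "2 * (real n + 1) * boros_moll 0 (Suc n) = (4 * real n + 3) * boros_moll 0 n"
proof (induction n)
  case 0
  show ?case by (simp add: boros_moll_def)
next
  case (Suc n)
  have "(real n + 1) * (real n + 2) * (2 * (real n + 2) * boros_moll 0 (n + 2))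
      = (real n + 1) * (real n + 2) * ((4 * real n + 7) * boros_moll 0 (n + 1))"
    using boros_moll_recurrence[of 0 n] Suc.IH unfolding rec_A_def rec_B_def rec_C_def
    by (simp add: algebra_simps power2_eq_square) algebra
  moreover have "(real n + 1) * (real n + 2) \<noteq> 0" by (simp add: add_nonneg_eq_0_iff)
  ultimately have "2 * (real n + 2) * boros_moll 0 (n + 2) = (4 * real n + 7) * boros_moll 0 (n + 1)"
    by simp
  then show ?case by (simp add: algebra_simps)
qed

lemma ratio_gap_identity:
  fixes a b c e x y z :: "'a :: comm_ring_1"
  assumes "b = x * a" "c = y * b" "e = z * c"
  shows "b^2 * (b^2 - a * c) - a^2 * (c^2 - b * e) = a^4 * x^2 * (x * (x - y) - y * (y - z))"
  using assms by (simp add: algebra_simps power2_eq_square power4_eq_xxxx)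

lemma d0_ratio_gap_neg:
  fixes t :: real
  assumes "0 \<le> t"
  defines "r \<equiv> \<lambda>t. (4 * t + 3) / (2 * t + 2)"
  shows "r t * (r t - r (t + 1)) - r (t + 1) * (r (t + 1) - r (t + 2)) < 0"
proof -
  define D where "D = (2 * t + 2)^2 * (2 * t + 4)^2 * (2 * t + 6)"
  have r: "r t * (2 * t + 2) = 4 * t + 3" "r (t + 1) * (2 * t + 4) = 4 * t + 7"
    "r (t + 2) * (2 * t + 6) = 4 * t + 11"
    using assms by (simp_all add: r_def field_simps)
  have "(r t * (r t - r (t + 1)) - r (t + 1) * (r (t + 1) - r (t + 2))) * D
      = - (88 + 168 * t + 64 * t^2)"
    unfolding D_def using r by algebra
  moreover have "- (88 + 168 * t + 64 * t^2) < 0" using assms zero_le_power2[of t] by linarith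
  ultimately have "(r t * (r t - r (t + 1)) - r (t + 1) * (r (t + 1) - r (t + 2))) * D < 0"
    by linarith
  moreover have "0 < D" using assms by (simp add: D_def)
  ultimately show ?thesis by (simp add: mult_less_0_iff)
qed

lemma boros_moll_0_gap_neg:
  assumes "1 \<le> m"
  shows "(boros_moll 0 m)^2 * ((boros_moll 0 m)^2 - boros_moll 0 (m - 1) * boros_moll 0 (m + 1))
    < (boros_moll 0 (m - 1))^2 * ((boros_moll 0 (m + 1))^2 - boros_moll 0 m * boros_moll 0 (m + 2))"
proof -
  obtain n where m: "m = Suc n" using assms by (cases m) auto
  define r where "r = (\<lambda>t::real. (4 * t + 3) / (2 * t + 2))"
  have step: "boros_moll 0 (Suc k) = r (real k) * boros_moll 0 k" for k
    using boros_moll_0_Suc[of k] by (simp add: r_def field_simps add_nonneg_eq_0_iff)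
  have "(boros_moll 0 (Suc n))^2
        * ((boros_moll 0 (Suc n))^2 - boros_moll 0 n * boros_moll 0 (Suc (Suc n)))
      - (boros_moll 0 n)^2
        * ((boros_moll 0 (Suc (Suc n)))^2 - boros_moll 0 (Suc n) * boros_moll 0 (Suc (Suc (Suc n))))
      = (boros_moll 0 n)^4 * (r (real n))^2 * (r (real n) * (r (real n) - r (real n + 1))
          - r (real n + 1) * (r (real n + 1) - r (real n + 2)))"
    by (rule ratio_gap_identity) (simp_all add: step algebra_simps)
  also have "\<dots> < 0"
    using d0_ratio_gap_neg[of "real n"] boros_moll_pos[of 0 n]
    by (intro mult_pos_neg) (simp_all add: r_def)
  finally show ?thesis by (simp add: m)
qed

definition ratio_lb_num :: "real \<Rightarrow> real \<Rightarrow> real" where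
  "ratio_lb_num i m = 2 * m * (2 * i^2 + m - i) - (m + i)"

definition ratio_lb_den :: "real \<Rightarrow> real \<Rightarrow> real" where
  "ratio_lb_den i m = (m - i) * (2 * i^2 + m - i)"

lemma ratio_lb_den_pos:
  fixes i m :: real
  assumes "1 \<le> i" "i + 1 \<le> m"
  shows "0 < ratio_lb_den i m"
proof -
  have "i \<le> i^2" using assms by (simp add: power2_eq_square)
  then show ?thesis
    using assms unfolding ratio_lb_den_def by (intro mult_pos_pos) linarith+
qed

lemma ratio_lb_num_pos:
  fixes i m :: real
  assumes "1 \<le> i" "i + 1 \<le> m"
  shows "0 < ratio_lb_num i m"
proof -
  have i2: "i \<le> i^2" using assms by (simp add: power2_eq_square)
  then have "m + i < 2 * (2 * i^2 + m - i)" using assms by (simp add: algebra_simps)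
  also have "\<dots> \<le> 2 * m * (2 * i^2 + m - i)"
    using assms i2 by (intro mult_right_mono) auto
  finally show ?thesis unfolding ratio_lb_num_def by simp
qed

lemma rec_B_pos: "0 \<le> i \<Longrightarrow> 0 \<le> n \<Longrightarrow> 0 < rec_B i n"
  unfolding rec_B_def by (intro mult_pos_pos) auto

lemma rec_C_pos: "i < n + 2 \<Longrightarrow> 0 \<le> n \<Longrightarrow> 0 < rec_C i n"
  unfolding rec_C_def by (intro mult_pos_pos) auto

lemma ratio_lb_step:
  fixes i m :: real
  assumes "1 \<le> i" "i + 1 \<le> m"
  shows "rec_C i (m - 1) * ratio_lb_num i m * ratio_lb_num i (m + 1)
    < (rec_A i (m - 1) * ratio_lb_num i m - rec_B i (m - 1) * ratio_lb_den i m)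
      * ratio_lb_den i (m + 1)"
proof -
  define j p where "j = i - 1" and "p = m - i - 1"
  have jp: "0 \<le> j" "0 \<le> p" and ip: "i = 1 + j" "m = 2 + j + p"
    using assms by (simp_all add: j_def p_def)
  have "(rec_A i (m - 1) * ratio_lb_num i m - rec_B i (m - 1) * ratio_lb_den i m)
        * ratio_lb_den i (m + 1)
      - rec_C i (m - 1) * ratio_lb_num i m * ratio_lb_num i (m + 1)
      = 360 + 630*p + 419*p^2 + 131*p^3 + 19*p^4 + p^5 + 2024*j + 3188*j*p + 1836*j*p^2 + 458*j*p^3
        + 42*j*p^4 + 3764*j^2 + 5106*j^2*p + 2416*j^2*p^2 + 458*j^2*p^3 + 28*j^2*p^4 + 3264*j^3
        + 3600*j^3*p + 1240*j^3*p^2 + 128*j^3*p^3 + 1464*j^4 + 1244*j^4*p + 264*j^4*p^2 + 4*j^4*p^3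
        + 336*j^5 + 216*j^5*p + 24*j^5*p^2 + 32*j^6 + 16*j^6*p" (is "_ = ?P")
    unfolding ip ratio_lb_num_def ratio_lb_den_def rec_A_def rec_B_def rec_C_def by algebra
  moreover have "0 < ?P"
    using jp by (intro add_pos_nonneg add_nonneg_nonneg mult_nonneg_nonneg zero_le_power; simp)
  ultimately show ?thesis by simp
qed

lemma boros_moll_ratio_lb:
  assumes "1 \<le> i" "i + 1 \<le> m"
  shows "ratio_lb_num (real i) (real m) * boros_moll i (m - 1)
    \<le> ratio_lb_den (real i) (real m) * boros_moll i m"
  using assms(2)
proof (induction m rule: dec_induct)
  case base
  have "2 * (real i + 1) * (ratio_lb_den (real i) (real (i + 1)) * boros_moll i (i + 1)
      - ratio_lb_num (real i) (real (i + 1)) * boros_moll i i)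
      = (2 * (real i)^2 + 6 * real i + 1) * boros_moll i i"
    using boros_moll_diag_Suc[of i] unfolding ratio_lb_num_def ratio_lb_den_def
    by (simp add: algebra_simps) algebra
  also have "0 \<le> \<dots>"
    using boros_moll_pos[of i i] by simp
  finally have "0 \<le> ratio_lb_den (real i) (real (i + 1)) * boros_moll i (i + 1)
      - ratio_lb_num (real i) (real (i + 1)) * boros_moll i i"
    by (simp add: zero_le_mult_iff add_pos_nonneg)
  then show ?case by simp
next
  case (step m)
  define a b c where "a = boros_moll i (m - 1)" and "b = boros_moll i m" and "c = boros_moll i (Suc m)"
  define A B C where "A = rec_A (real i) (real m - 1)" and "B = rec_B (real i) (real m - 1)"
    and "C = rec_C (real i) (real m - 1)"
  define N N' D D' where "N = ratio_lb_num (real i) (real m)"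
    and "N' = ratio_lb_num (real i) (real m + 1)" and "D = ratio_lb_den (real i) (real m)"
    and "D' = ratio_lb_den (real i) (real m + 1)"
  have im: "1 \<le> real i" "real i + 1 \<le> real m" using assms(1) step.hyps by auto
  have rec: "C * c = A * b - B * a"
    using boros_moll_recurrence[of i "m - 1"] step.hyps unfolding a_def b_def c_def A_def B_def C_def
    by (simp add: of_nat_diff numeral_2_eq_2 Suc_diff_Suc)
  have IH: "B * (N * a) \<le> B * (D * b)"
    using step.IH rec_B_pos[of "real i" "real m - 1"] im unfolding a_def b_def B_def N_def D_def
    by (intro mult_left_mono) auto
  have b: "0 < b" unfolding b_def using step.hyps by (intro boros_moll_pos) simp
  have "C * N * (N' * b) \<le> (A * N - B * D) * D' * b"
    using ratio_lb_step[OF im] b unfolding A_def B_def C_def N_def N'_def D_def D'_def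
    by (simp add: mult.assoc[symmetric])
  also have "\<dots> = D' * (A * N * b - B * (D * b))" by (simp add: algebra_simps)
  also have "\<dots> \<le> D' * (A * N * b - B * (N * a))"
    using IH ratio_lb_den_pos[of "real i" "real m + 1"] im unfolding D'_def
    by (intro mult_left_mono) auto
  also have "\<dots> = N * D' * (A * b - B * a)" by (simp add: algebra_simps)
  also have "\<dots> = C * N * (D' * c)" unfolding rec[symmetric] by (simp add: ac_simps)
  finally have "N' * b \<le> D' * c"
    using rec_C_pos[of "real i" "real m - 1"] ratio_lb_num_pos[OF im] im unfolding C_def N_def
    by (simp add: mult_le_cancel_left_pos)
  then show ?case by (simp add: b_def c_def N'_def D'_def add.commute)
qed

definition gap_form :: "real \<Rightarrow> real \<Rightarrow> real \<Rightarrow> real \<Rightarrow> real" where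
  "gap_form i m x y =
     rec_C i m * (rec_C i (m - 1))^2 * x^4
     - rec_C i m * rec_C i (m - 1) * x^2 * (rec_A i (m - 1) * x - rec_B i (m - 1) * y) * y
     - rec_C i m * (rec_A i (m - 1) * x - rec_B i (m - 1) * y)^2 * y^2
     + rec_A i m * rec_C i (m - 1) * x * (rec_A i (m - 1) * x - rec_B i (m - 1) * y) * y^2
     - rec_B i m * (rec_C i (m - 1))^2 * x^2 * y^2"

lemma gap_form_recurrence:
  assumes "rec_C i (m - 1) * c = rec_A i (m - 1) * b - rec_B i (m - 1) * a"
    and "rec_C i m * e = rec_A i m * c - rec_B i m * b"
  shows "rec_C i m * (rec_C i (m - 1))^2 * (b^2 * (b^2 - a * c) - a^2 * (c^2 - b * e))
    = gap_form i m b a"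
  using assms unfolding gap_form_def by algebra

lemma gap_form_homogeneous: "gap_form i m (t * x) (t * y) = t^4 * gap_form i m x y"
  unfolding gap_form_def by algebra

lemma gap_form_pos_shifted:
  fixes j p s :: real
  defines "N \<equiv> ratio_lb_num (1 + j) (2 + j + p)" and "D \<equiv> ratio_lb_den (1 + j) (2 + j + p)"
  assumes "0 \<le> j" "0 \<le> p" "0 \<le> s"
  shows "0 < gap_form (1 + j) (2 + j + p) (N + s * D) D"
proof -
  have "gap_form (1 + j) (2 + j + p) (N + s * D) D
    = 179403984 + 491217696*s + 507337344*s^2 + 217230336*s^3 + 26873856*s^4 + 1069329276*p
        + 3312645984*p*s + 3851779392*p*s^2 + 1827608832*p*s^3 + 239625216*p*s^4 + 2944687608*p^2
        + 10288575288*p^2*s + 13498459488*p^2*s^2 + 7122784896*p^2*s^3 + 988360704*p^2*s^4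
        + 4968523800*p^3 + 19539094104*p^3*s + 29007336816*p^3*s^2 + 17090491968*p^3*s^3
        + 2505364992*p^3*s^4 + 5741230104*p^4 + 25392564072*p^4*s + 42814519488*p^4*s^2
        + 28296206496*p^4*s^3 + 4373367552*p^4*s^4 + 4807909332*p^5 + 23934129480*p^5*s
        + 46057029552*p^5*s^2 + 34331685408*p^5*s^3 + 5582025792*p^5*s^4 + 3009997872*p^6
        + 16910930352*p^6*s + 37378062272*p^6*s^2 + 31631381472*p^6*s^3 + 5397693696*p^6*s^4
        + 1431399696*p^7 + 9124048304*p^7*s + 23359186976*p^7*s^2 + 22620629536*p^7*s^3
        + 4041522816*p^7*s^4 + 519652928*p^8 + 3791052912*p^8*s + 11367516800*p^8*s^2
        + 12720045376*p^8*s^3 + 2373720064*p^8*s^4 + 143331364*p^9 + 1213303664*p^9*s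
        + 4324406560*p^9*s^2 + 5659913024*p^9*s^3 + 1100552128*p^9*s^4 + 29567768*p^10
        + 296692376*p^10*s + 1282402912*p^10*s^2 + 1993949248*p^10*s^3 + 403046912*p^10*s^4
        + 4423640*p^11 + 54439608*p^11*s + 293485360*p^11*s^2 + 553291904*p^11*s^3
        + 115996928*p^11*s^4 + 453720*p^12 + 7255176*p^12*s + 50838080*p^12*s^2 + 119505696*p^12*s^3
        + 25928448*p^12*s^4 + 28556*p^13 + 662888*p^13*s + 6446576*p^13*s^2 + 19678880*p^13*s^3
        + 4409280*p^13*s^4 + 832*p^14 + 37120*p^14*s + 564608*p^14*s^2 + 2386784*p^14*s^3
        + 551168*p^14*s^4 + 960*p^15*s + 30528*p^15*s^2 + 200992*p^15*s^3 + 47744*p^15*s^4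
        + 768*p^16*s^2 + 10496*p^16*s^3 + 2560*p^16*s^4 + 256*p^17*s^3 + 64*p^17*s^4 + 2488488156*j
        + 5922812016*j*s + 5247649152*j*s^2 + 1897406208*j*s^3 + 203793408*j*s^4 + 13932092988*j*p
        + 37694384856*j*p*s + 37806323616*j*p*s^2 + 15210695808*j*p*s^3 + 1745307648*j*p*s^4
        + 35883485676*j*p^2 + 109848870792*j*p^2*s + 125034754896*j*p^2*s^2 + 56195052480*j*p^2*s^3
        + 6880453632*j*p^2*s^4 + 56362709844*j*p^3 + 194487442920*j*p^3*s + 252033093360*j*p^3*s^2
        + 127095016032*j*p^3*s^3 + 16579033344*j*p^3*s^4 + 60311125008*j*p^4 + 233915664648*j*p^4*s
        + 346564068864*j*p^4*s^2 + 197113304736*j*p^4*s^3 + 27341088192*j*p^4*s^4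
        + 46493343912*j*p^5 + 202315223216*j*p^5*s + 344629257376*j*p^5*s^2 + 222467274144*j*p^5*s^3
        + 32739356736*j*p^5*s^4 + 26611184296*j*p^6 + 129841915344*j*p^6*s + 256214997088*j*p^6*s^2
        + 189161282976*j*p^6*s^3 + 29463819456*j*p^6*s^4 + 11477057848*j*p^7 + 62843950480*j*p^7*s
        + 145111871392*j*p^7*s^2 + 123703676864*j*p^7*s^3 + 20341682368*j*p^7*s^4 + 3742649164*j*p^8
        + 23059785792*j*p^8*s + 63165203648*j*p^8*s^2 + 62925528640*j*p^8*s^3
        + 10895473920*j*p^8*s^4 + 916422620*j*p^9 + 6385644920*j*p^9*s + 21143699616*j*p^9*s^2
        + 24998149056*j*p^9*s^3 + 4545728128*j*p^9*s^4 + 165366380*j*p^10 + 1313923048*j*p^10*s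
        + 5401163344*j*p^10*s^2 + 7734945536*j*p^10*s^3 + 1473330560*j*p^10*s^4 + 21230580*j*p^11
        + 194829064*j*p^11*s + 1034541552*j*p^11*s^2 + 1845605344*j*p^11*s^3 + 367300224*j*p^11*s^4
        + 1820872*j*p^12 + 19681992*j*p^12*s + 143895360*j*p^12*s^2 + 333084448*j*p^12*s^3
        + 69087168*j*p^12*s^4 + 92352*j*p^13 + 1212544*j*p^13*s + 13727136*j*p^13*s^2
        + 43975712*j*p^13*s^3 + 9483584*j*p^13*s^4 + 2048*j*p^14 + 34368*j*p^14*s
        + 803456*j*p^14*s^2 + 4007328*j*p^14*s^3 + 896448*j*p^14*s^4 + 21760*j*p^15*s^2
        + 225280*j*p^15*s^3 + 52160*j*p^15*s^4 + 5888*j*p^16*s^3 + 1408*j*p^16*s^4 + 15787979892*j^2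
        + 32957128368*j^2*s + 25261450560*j^2*s^2 + 7831489536*j^2*s^3 + 736791552*j^2*s^4
        + 82673848692*j^2*p + 197877846672*j^2*p*s + 172913066064*j^2*p*s^2 + 59968247616*j^2*p*s^3
        + 6074797824*j^2*p*s^4 + 198103160052*j^2*p^2 + 540735776568*j^2*p^2*s
        + 540311435280*j^2*p^2*s^2 + 210533922144*j^2*p^2*s^3 + 22947473664*j^2*p^2*s^4
        + 287735074188*j^2*p^3 + 891734545032*j^2*p^3*s + 1022749857888*j^2*p^3*s^2
        + 449948754144*j^2*p^3*s^3 + 52703524800*j^2*p^3*s^4 + 282706271144*j^2*p^4
        + 991383289664*j^2*p^4*s + 1311727559840*j^2*p^4*s^2 + 655362399168*j^2*p^4*s^3
        + 82353405888*j^2*p^4*s^4 + 198438741576*j^2*p^5 + 785565434816*j^2*p^5*s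
        + 1207306616224*j^2*p^5*s^2 + 689907628992*j^2*p^5*s^3 + 92813859072*j^2*p^5*s^4
        + 102368686024*j^2*p^6 + 457004179184*j^2*p^6*s + 823401111712*j^2*p^6*s^2
        + 542965063616*j^2*p^6*s^3 + 78018468288*j^2*p^6*s^4 + 39285946072*j^2*p^7
        + 197903342928*j^2*p^7*s + 423339493184*j^2*p^7*s^2 + 325765607104*j^2*p^7*s^3
        + 49870307392*j^2*p^7*s^4 + 11210570276*j^2*p^8 + 63909487024*j^2*p^8*s
        + 165168015744*j^2*p^8*s^2 + 150469786624*j^2*p^8*s^3 + 24477582720*j^2*p^8*s^4
        + 2347598916*j^2*p^9 + 15241980752*j^2*p^9*s + 48779295504*j^2*p^9*s^2
        + 53611352128*j^2*p^9*s^3 + 9243286784*j^2*p^9*s^4 + 350296388*j^2*p^10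
        + 2621941400*j^2*p^10*s + 10773118544*j^2*p^10*s^2 + 14652396384*j^2*p^10*s^3
        + 2670703232*j^2*p^10*s^4 + 35218012*j^2*p^11 + 311174760*j^2*p^11*s
        + 1736205024*j^2*p^11*s^2 + 3028634592*j^2*p^11*s^3 + 582200896*j^2*p^11*s^4
        + 2133952*j^2*p^12 + 23454624*j^2*p^12*s + 195508256*j^2*p^12*s^2 + 461410112*j^2*p^12*s^3
        + 93347008*j^2*p^12*s^4 + 58688*j^2*p^13 + 944160*j^2*p^13*s + 14230400*j^2*p^13*s^2
        + 49588672*j^2*p^13*s^3 + 10540800*j^2*p^13*s^4 + 12288*j^2*p^14*s + 572800*j^2*p^14*s^2
        + 3480704*j^2*p^14*s^3 + 776896*j^2*p^14*s^4 + 8448*j^2*p^15*s^2 + 137088*j^2*p^15*s^3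
        + 32192*j^2*p^15*s^4 + 2048*j^2*p^16*s^3 + 512*j^2*p^16*s^4 + 61307991504*j^3
        + 112826242656*j^3*s + 75295544112*j^3*s^2 + 20210751936*j^3*s^3 + 1673581824*j^3*s^4
        + 299476772856*j^3*p + 638985566808*j^3*p*s + 490137423408*j^3*p*s^2
        + 148080229920*j^3*p*s^3 + 13305876480*j^3*p*s^4 + 665429580864*j^3*p^2
        + 1636602246648*j^3*p^2*s + 1448111085696*j^3*p^2*s^2 + 494814530592*j^3*p^2*s^3
        + 48239337024*j^3*p^2*s^4 + 890097745728*j^3*p^3 + 2511895149408*j^3*p^3*s
        + 2575422598304*j^3*p^3*s^2 + 1000728886848*j^3*p^3*s^3 + 105765287616*j^3*p^3*s^4
        + 798945925120*j^3*p^4 + 2578321771168*j^3*p^4*s + 3081716259296*j^3*p^4*s^2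
        + 1370581430720*j^3*p^4*s^3 + 156821116800*j^3*p^4*s^4 + 507405341136*j^3*p^5
        + 1868693029168*j^3*p^5*s + 2625281704864*j^3*p^5*s^2 + 1347140218944*j^3*p^5*s^3
        + 166565159552*j^3*p^5*s^4 + 234040952480*j^3*p^6 + 983200823024*j^3*p^6*s
        + 1641963639616*j^3*p^6*s^2 + 982027119680*j^3*p^6*s^3 + 130921505408*j^3*p^6*s^4
        + 79109564192*j^3*p^7 + 379734270272*j^3*p^7*s + 765694958848*j^3*p^7*s^2
        + 540738853888*j^3*p^7*s^3 + 77541265024*j^3*p^7*s^4 + 19493299120*j^3*p^8
        + 107429115296*j^3*p^8*s + 267333725232*j^3*p^8*s^2 + 226743705536*j^3*p^8*s^3
        + 34883766016*j^3*p^8*s^4 + 3429583480*j^3*p^9 + 21913466552*j^3*p^9*s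
        + 69454019120*j^3*p^9*s^2 + 72374722592*j^3*p^9*s^3 + 11914808832*j^3*p^9*s^4
        + 412847008*j^3*p^10 + 3115993432*j^3*p^10*s + 13191088320*j^3*p^10*s^2
        + 17426076448*j^3*p^10*s^3 + 3061985856*j^3*p^10*s^4 + 31338848*j^3*p^11
        + 289934112*j^3*p^11*s + 1770484192*j^3*p^11*s^2 + 3103381184*j^3*p^11*s^3
        + 580624576*j^3*p^11*s^4 + 1262592*j^3*p^12 + 15577888*j^3*p^12*s + 157975104*j^3*p^12*s^2
        + 394712000*j^3*p^12*s^3 + 78462592*j^3*p^12*s^4 + 16384*j^3*p^13 + 353792*j^3*p^13*s
        + 8321152*j^3*p^13*s^2 + 33712256*j^3*p^13*s^3 + 7107968*j^3*p^13*s^4 + 192512*j^3*p^14*s^2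
        + 1717632*j^3*p^14*s^3 + 383744*j^3*p^14*s^4 + 38912*j^3*p^15*s^3 + 9216*j^3*p^15*s^4
        + 163924692192*j^4 + 266758457184*j^4*s + 155681535312*j^4*s^2 + 36390404736*j^4*s^3
        + 2656634112*j^4*s^4 + 745328568528*j^4*p + 1424699538384*j^4*p*s + 964385312496*j^4*p*s^2
        + 255435410304*j^4*p*s^3 + 20391899904*j^4*p*s^4 + 1531508575488*j^4*p^2
        + 3417806591360*j^4*p^2*s + 2694948723040*j^4*p^2*s^2 + 813239890272*j^4*p^2*s^3
        + 71030889792*j^4*p^2*s^4 + 1880221650400*j^4*p^3 + 4876742252992*j^4*p^3*s
        + 4503130611776*j^4*p^3*s^2 + 1557591123744*j^4*p^3*s^3 + 148810897536*j^4*p^3*s^4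
        + 1535191931680*j^4*p^4 + 4614084496800*j^4*p^4*s + 5025187577888*j^4*p^4*s^2
        + 2006751791232*j^4*p^4*s^3 + 209520384128*j^4*p^4*s^4 + 877358270688*j^4*p^5
        + 3051733744576*j^4*p^5*s + 3958774216032*j^4*p^5*s^2 + 1841640202624*j^4*p^5*s^3
        + 209812254144*j^4*p^5*s^4 + 359289873056*j^4*p^6 + 1447489501280*j^4*p^6*s
        + 2267196608960*j^4*p^6*s^2 + 1242879547968*j^4*p^6*s^3 + 154203731840*j^4*p^6*s^4
        + 105970376768*j^4*p^7 + 496319617312*j^4*p^7*s + 956690248960*j^4*p^7*s^2
        + 627365673152*j^4*p^7*s^3 + 84574520832*j^4*p^7*s^4 + 22258958080*j^4*p^8
        + 122179880064*j^4*p^8*s + 297821942416*j^4*p^8*s^2 + 238328982272*j^4*p^8*s^3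
        + 34824649984*j^4*p^8*s^4 + 3228634192*j^4*p^9 + 21094567024*j^4*p^9*s
        + 67686394928*j^4*p^9*s^2 + 67922387200*j^4*p^9*s^3 + 10730775424*j^4*p^9*s^4
        + 304111200*j^4*p^10 + 2436847520*j^4*p^10*s + 10956933728*j^4*p^10*s^2
        + 14330680160*j^4*p^10*s^3 + 2441996096*j^4*p^10*s^4 + 16429024*j^4*p^11
        + 172121376*j^4*p^11*s + 1206605888*j^4*p^11*s^2 + 2180160800*j^4*p^11*s^3
        + 399837568*j^4*p^11*s^4 + 372480*j^4*p^12 + 6127872*j^4*p^12*s + 83025536*j^4*p^12*s^2
        + 228248320*j^4*p^12*s^3 + 44978048*j^4*p^12*s^4 + 60416*j^4*p^13*s + 2990592*j^4*p^13*s^2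
        + 15113472*j^4*p^13*s^3 + 3198400*j^4*p^13*s^4 + 33792*j^4*p^14*s^2 + 532480*j^4*p^14*s^3
        + 121344*j^4*p^14*s^4 + 6144*j^4*p^15*s^3 + 1536*j^4*p^15*s^4 + 321199914336*j^5
        + 462881323392*j^5*s + 236800197888*j^5*s^2 + 48321261504*j^5*s^3 + 3105983232*j^5*s^4
        + 1356343378928*j^5*p + 2330197546688*j^5*p*s + 1396443185792*j^5*p*s^2
        + 325229105952*j^5*p*s^3 + 23037378048*j^5*p*s^4 + 2570103252112*j^5*p^2
        + 5230523631872*j^5*p^2*s + 3690803161024*j^5*p^2*s^2 + 987114744480*j^5*p^2*s^3
        + 77154310080*j^5*p^2*s^4 + 2885660230096*j^5*p^3 + 6927165678496*j^5*p^3*s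
        + 5791322956352*j^5*p^3*s^2 + 1790794958720*j^5*p^3*s^3 + 154522286784*j^5*p^3*s^4
        + 2133521448976*j^5*p^4 + 6027480836512*j^5*p^4*s + 6020680593600*j^5*p^4*s^2
        + 2169777362688*j^5*p^4*s^3 + 206614058624*j^5*p^4*s^4 + 1090767420784*j^5*p^5
        + 3626363840160*j^5*p^5*s + 4378476799424*j^5*p^5*s^2 + 1857606600896*j^5*p^5*s^3
        + 194999065344*j^5*p^5*s^4 + 393506876976*j^5*p^6 + 1543732239648*j^5*p^6*s
        + 2290093718592*j^5*p^6*s^2 + 1158767811776*j^5*p^6*s^3 + 133875802240*j^5*p^6*s^4
        + 100203018224*j^5*p^7 + 466953174496*j^5*p^7*s + 871065741888*j^5*p^7*s^2
        + 534811082112*j^5*p^7*s^3 + 67867156608*j^5*p^7*s^4 + 17670987088*j^5*p^8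
        + 99090303328*j^5*p^8*s + 240407839808*j^5*p^8*s^2 + 183344193856*j^5*p^8*s^3
        + 25498382592*j^5*p^8*s^4 + 2064319456*j^5*p^9 + 14268340256*j^5*p^9*s
        + 47383687360*j^5*p^9*s^2 + 46380009760*j^5*p^9*s^3 + 7052922624*j^5*p^9*s^4
        + 146134656*j^5*p^10 + 1305350496*j^5*p^10*s + 6447196928*j^5*p^10*s^2
        + 8497725344*j^5*p^10*s^3 + 1409891776*j^5*p^10*s^4 + 5160192*j^5*p^11 + 66455808*j^5*p^11*s
        + 568385152*j^5*p^11*s^2 + 1088403968*j^5*p^11*s^3 + 196655808*j^5*p^11*s^4 + 49152*j^5*p^12
        + 1350656*j^5*p^12*s + 28653312*j^5*p^12*s^2 + 91416832*j^5*p^12*s^3 + 17965952*j^5*p^12*s^4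
        + 605184*j^5*p^13*s^2 + 4447232*j^5*p^13*s^3 + 950784*j^5*p^13*s^4 + 92160*j^5*p^14*s^3
        + 21504*j^5*p^14*s^4 + 478622545632*j^6 + 610847650752*j^6*s + 274002725376*j^6*s^2
        + 48779751936*j^6*s^3 + 2748586752*j^6*s^4 + 1872210655776*j^6*p + 2896249303424*j^6*p*s
        + 1538366603136*j^6*p*s^2 + 314976232960*j^6*p*s^3 + 19710716928*j^6*p*s^4
        + 3260674125600*j^6*p^2 + 6073994369536*j^6*p^2*s + 3843815434496*j^6*p^2*s^2
        + 911508311936*j^6*p^2*s^3 + 63491505088*j^6*p^2*s^4 + 3334048531776*j^6*p^3
        + 7449827954688*j^6*p^3*s + 5657876064384*j^6*p^3*s^2 + 1565774179968*j^6*p^3*s^3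
        + 121559559232*j^6*p^3*s^4 + 2220038730464*j^6*p^4 + 5942863464576*j^6*p^4*s
        + 5469909198976*j^6*p^4*s^2 + 1782386026240*j^6*p^4*s^3 + 154286259968*j^6*p^4*s^4
        + 1008153420928*j^6*p^5 + 3238473406464*j^6*p^5*s + 3662429092224*j^6*p^5*s^2
        + 1421026828032*j^6*p^5*s^3 + 137082298624*j^6*p^5*s^4 + 317356392032*j^6*p^6
        + 1229941083392*j^6*p^6*s + 1742747757184*j^6*p^6*s^2 + 817081740800*j^6*p^6*s^3
        + 87739593344*j^6*p^6*s^4 + 68843433920*j^6*p^7 + 325424082688*j^6*p^7*s
        + 594241807744*j^6*p^7*s^2 + 343409200128*j^6*p^7*s^3 + 40982038912*j^6*p^7*s^4
        + 9993149632*j^6*p^8 + 58777508288*j^6*p^8*s + 144246062464*j^6*p^8*s^2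
        + 105614646016*j^6*p^8*s^3 + 13981498368*j^6*p^8*s^4 + 910425184*j^6*p^9
        + 6916102784*j^6*p^9*s + 24359983360*j^6*p^9*s^2 + 23511232256*j^6*p^9*s^3
        + 3446181632*j^6*p^9*s^4 + 45555712*j^6*p^10 + 482960128*j^6*p^10*s
        + 2732300928*j^6*p^10*s^2 + 3692808832*j^6*p^10*s^3 + 598323136*j^6*p^10*s^4
        + 891904*j^6*p^11 + 16325888*j^6*p^11*s + 186249216*j^6*p^11*s^2 + 390149504*j^6*p^11*s^3
        + 69803072*j^6*p^11*s^4 + 139264*j^6*p^12*s + 6382080*j^6*p^12*s^2 + 25371648*j^6*p^12*s^3
        + 5014528*j^6*p^12*s^4 + 61440*j^6*p^13*s^2 + 842752*j^6*p^13*s^3 + 184832*j^6*p^13*s^4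
        + 8192*j^6*p^14*s^3 + 2048*j^6*p^14*s^4 + 555000261184*j^7 + 626385405952*j^7*s
        + 245855619328*j^7*s^2 + 38037709056*j^7*s^3 + 1863929856*j^7*s^4 + 2004639957920*j^7*p
        + 2793989401664*j^7*p*s + 1313858333632*j^7*p*s^2 + 235680425344*j^7*p*s^3
        + 12927047680*j^7*p*s^4 + 3195719390592*j^7*p^2 + 5463373932224*j^7*p^2*s
        + 3100769410752*j^7*p^2*s^2 + 650103792768*j^7*p^2*s^3 + 40047633408*j^7*p^2*s^4
        + 2960034395872*j^7*p^3 + 6187133162304*j^7*p^3*s + 4274316033344*j^7*p^3*s^2
        + 1056404832000*j^7*p^3*s^3 + 73260253696*j^7*p^3*s^4 + 1762911593664*j^7*p^4
        + 4506101303232*j^7*p^4*s + 3832827339200*j^7*p^4*s^2 + 1127803279616*j^7*p^4*s^3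
        + 88159445504*j^7*p^4*s^4 + 704648687584*j^7*p^5 + 2211471420352*j^7*p^5*s
        + 2353857534144*j^7*p^5*s^2 + 834957101568*j^7*p^5*s^3 + 73588998656*j^7*p^5*s^4
        + 191162170624*j^7*p^6 + 743425526080*j^7*p^6*s + 1013592651072*j^7*p^6*s^2
        + 440679756800*j^7*p^6*s^3 + 43768218112*j^7*p^6*s^4 + 34705846048*j^7*p^7
        + 170114072000*j^7*p^7*s + 307492462016*j^7*p^7*s^2 + 167644354816*j^7*p^7*s^3
        + 18744008192*j^7*p^7*s^4 + 4035426432*j^7*p^8 + 25704627008*j^7*p^8*s
        + 64926683200*j^7*p^8*s^2 + 45855431168*j^7*p^8*s^3 + 5764384256*j^7*p^8*s^4
        + 273597056*j^7*p^9 + 2401394432*j^7*p^9*s + 9236920960*j^7*p^9*s^2 + 8870598784*j^7*p^9*s^3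
        + 1252232704*j^7*p^9*s^4 + 8755712*j^7*p^10 + 120980736*j^7*p^10*s + 830134528*j^7*p^10*s^2
        + 1171672960*j^7*p^10*s^3 + 185602560*j^7*p^10*s^4 + 65536*j^7*p^11 + 2324480*j^7*p^11*s
        + 41379328*j^7*p^11*s^2 + 98926592*j^7*p^11*s^3 + 17590272*j^7*p^11*s^4
        + 825344*j^7*p^12*s^2 + 4686848*j^7*p^12*s^3 + 937984*j^7*p^12*s^4 + 90112*j^7*p^13*s^3
        + 20480*j^7*p^13*s^4 + 507918863808*j^8 + 505284170624*j^8*s + 172715310976*j^8*s^2
        + 23048346624*j^8*s^3 + 970014720*j^8*s^4 + 1687217398272*j^8*p + 2116929425792*j^8*p*s
        + 878033911040*j^8*p*s^2 + 137008517120*j^8*p*s^3 + 6505652224*j^8*p*s^4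
        + 2448998025152*j^8*p^2 + 3849005379456*j^8*p^2*s + 1954511367424*j^8*p^2*s^2
        + 359946865408*j^8*p^2*s^3 + 19373549568*j^8*p^2*s^4 + 2040765471424*j^8*p^3
        + 4008693074816*j^8*p^3*s + 2517033201664*j^8*p^3*s^2 + 552392979200*j^8*p^3*s^3
        + 33823459328*j^8*p^3*s^4 + 1077337454656*j^8*p^4 + 2650872854784*j^8*p^4*s
        + 2085849210880*j^8*p^4*s^2 + 551538086144*j^8*p^4*s^3 + 38511222272*j^8*p^4*s^4
        + 374467227456*j^8*p^5 + 1162885053952*j^8*p^5*s + 1168840779776*j^8*p^5*s^2
        + 377568986368*j^8*p^5*s^3 + 30101193216*j^8*p^5*s^4 + 86089041984*j^8*p^6
        + 342409644928*j^8*p^6*s + 452144879872*j^8*p^6*s^2 + 181790235392*j^8*p^6*s^3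
        + 16552820224*j^8*p^6*s^4 + 12761590848*j^8*p^7 + 66735101312*j^8*p^7*s
        + 120771621888*j^8*p^7*s^2 + 62046406400*j^8*p^7*s^3 + 6451066368*j^8*p^7*s^4
        + 1142429184*j^8*p^8 + 8237290624*j^8*p^8*s + 21843580032*j^8*p^8*s^2
        + 14903176960*j^8*p^8*s^3 + 1768649216*j^8*p^8*s^4 + 53529536*j^8*p^9 + 585978752*j^8*p^9*s
        + 2555389696*j^8*p^9*s^2 + 2458507008*j^8*p^9*s^3 + 333009408*j^8*p^9*s^4 + 905216*j^8*p^10
        + 19444736*j^8*p^10*s + 176375296*j^8*p^10*s^2 + 265170432*j^8*p^10*s^3
        + 41034240*j^8*p^10*s^4 + 150528*j^8*p^11*s + 5869568*j^8*p^11*s^2 + 17009152*j^8*p^11*s^3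
        + 3017216*j^8*p^11*s^4 + 49152*j^8*p^12*s^2 + 528384*j^8*p^12*s^3 + 108544*j^8*p^12*s^4
        + 4096*j^8*p^13*s^3 + 1024*j^8*p^13*s^4 + 369681257920*j^9 + 322391282688*j^9*s
        + 95204046080*j^9*s^2 + 10826697216*j^9*s^3 + 384141312*j^9*s^4 + 1123608947328*j^9*p
        + 1265967026688*j^9*p*s + 459966686592*j^9*p*s^2 + 61710128896*j^9*p*s^3
        + 2490187776*j^9*p*s^4 + 1474817201920*j^9*p^2 + 2132566728704*j^9*p^2*s
        + 963781394176*j^9*p^2*s^2 + 154198443776*j^9*p^2*s^3 + 7120626176*j^9*p^2*s^4
        + 1095648079680*j^9*p^3 + 2031919278208*j^9*p^3*s + 1155643492992*j^9*p^3*s^2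
        + 222922661120*j^9*p^3*s^3 + 11840904704*j^9*p^3*s^4 + 506496121664*j^9*p^4
        + 1211204108672*j^9*p^4*s + 880615166976*j^9*p^4*s^2 + 207315176704*j^9*p^4*s^3
        + 12714574336*j^9*p^4*s^4 + 150564021504*j^9*p^5 + 470207719168*j^9*p^5*s
        + 447063876224*j^9*p^5*s^2 + 130424022784*j^9*p^5*s^3 + 9258174976*j^9*p^5*s^4
        + 28641800832*j^9*p^6 + 119568026368*j^9*p^6*s + 153792668416*j^9*p^6*s^2
        + 56769303296*j^9*p^6*s^3 + 4670670336*j^9*p^6*s^4 + 3342168384*j^9*p^7
        + 19435623040*j^9*p^7*s + 35643622784*j^9*p^7*s^2 + 17155796736*j^9*p^7*s^3
        + 1637297664*j^9*p^7*s^4 + 216321408*j^9*p^8 + 1893878656*j^9*p^8*s + 5401041152*j^9*p^8*s^2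
        + 3548583168*j^9*p^8*s^3 + 393172480*j^9*p^8*s^4 + 6127616*j^9*p^9 + 96148480*j^9*p^9*s
        + 500951040*j^9*p^9*s^2 + 484410880*j^9*p^9*s^3 + 62410240*j^9*p^9*s^4 + 32768*j^9*p^10
        + 1770496*j^9*p^10*s + 24771584*j^9*p^10*s^2 + 40585728*j^9*p^10*s^3 + 6103040*j^9*p^10*s^4
        + 458752*j^9*p^11*s^2 + 1798144*j^9*p^11*s^3 + 318464*j^9*p^11*s^4 + 28672*j^9*p^12*s^3
        + 6144*j^9*p^12*s^4 + 214514571584*j^10 + 162635468288*j^10*s + 40988583936*j^10*s^2
        + 3901022208*j^10*s^3 + 113534976*j^10*s^4 + 592680068928*j^10*p + 596951795200*j^10*p*s
        + 187936503296*j^10*p*s^2 + 21298646016*j^10*p*s^3 + 710680576*j^10*p*s^4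
        + 697161546304*j^10*p^2 + 927300724096*j^10*p^2*s + 369644974848*j^10*p^2*s^2
        + 50513601024*j^10*p^2*s^3 + 1947822592*j^10*p^2*s^4 + 456111887680*j^10*p^3
        + 802768772736*j^10*p^3*s + 410816485632*j^10*p^3*s^2 + 68544086528*j^10*p^3*s^3
        + 3075755520*j^10*p^3*s^4 + 181553731520*j^10*p^4 + 427223696640*j^10*p^4*s
        + 285902531072*j^10*p^4*s^2 + 59028046848*j^10*p^4*s^3 + 3099366912*j^10*p^4*s^4
        + 45065554880*j^10*p^5 + 144817113856*j^10*p^5*s + 130206566400*j^10*p^5*s^2
        + 33822124032*j^10*p^5*s^3 + 2086162944*j^10*p^5*s^4 + 6843376832*j^10*p^6
        + 31191766400*j^10*p^6*s + 39268985600*j^10*p^6*s^2 + 13130809856*j^10*p^6*s^3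
        + 953952768*j^10*p^6*s^4 + 592503744*j^10*p^7 + 4104169088*j^10*p^7*s
        + 7730631936*j^10*p^7*s^2 + 3442661888*j^10*p^7*s^3 + 295185920*j^10*p^7*s^4
        + 24731648*j^10*p^8 + 299860480*j^10*p^8*s + 948793344*j^10*p^8*s^2 + 593997824*j^10*p^8*s^3
        + 60242432*j^10*p^8*s^4 + 310272*j^10*p^9 + 9730560*j^10*p^9*s + 65709056*j^10*p^9*s^2
        + 63608832*j^10*p^9*s^3 + 7656960*j^10*p^9*s^4 + 65536*j^10*p^10*s + 2039808*j^10*p^10*s^2
        + 3737600*j^10*p^10*s^3 + 537600*j^10*p^10*s^4 + 12288*j^10*p^11*s^2 + 88064*j^10*p^11*s^3
        + 15360*j^10*p^11*s^4 + 99002591744*j^11 + 64469172736*j^11*s + 13620489472*j^11*s^2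
        + 1056267264*j^11*s^3 + 24195072*j^11*s^4 + 246577365248*j^11*p + 220430115200*j^11*p*s
        + 59154907648*j^11*p*s^2 + 5515827712*j^11*p*s^3 + 146022400*j^11*p*s^4
        + 256822672640*j^11*p^2 + 313852859264*j^11*p^2*s + 108815941888*j^11*p^2*s^2
        + 12380849664*j^11*p^2*s^3 + 382606336*j^11*p^2*s^4 + 145485815040*j^11*p^3
        + 244651609856*j^11*p^3*s + 111410892800*j^11*p^3*s^2 + 15690067968*j^11*p^3*s^3
        + 571218944*j^11*p^3*s^4 + 48669215488*j^11*p^4 + 114764140800*j^11*p^4*s
        + 70156586752*j^11*p^4*s^2 + 12409796608*j^11*p^4*s^3 + 536340480*j^11*p^4*s^4
        + 9727836672*j^11*p^5 + 33352105344*j^11*p^5*s + 28270242304*j^11*p^5*s^2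
        + 6392898048*j^11*p^5*s^3 + 329891840*j^11*p^5*s^4 + 1111621120*j^11*p^6
        + 5921163136*j^11*p^6*s + 7321993984*j^11*p^6*s^2 + 2169191936*j^11*p^6*s^3
        + 134208512*j^11*p^6*s^4 + 63924224*j^11*p^7 + 603408896*j^11*p^7*s
        + 1185371136*j^11*p^7*s^2 + 477576192*j^11*p^7*s^3 + 35544064*j^11*p^7*s^4
        + 1300480*j^11*p^8 + 30411264*j^11*p^8*s + 111489024*j^11*p^8*s^2 + 65015808*j^11*p^8*s^3
        + 5840896*j^11*p^8*s^4 + 507904*j^11*p^9*s + 5160960*j^11*p^9*s^2 + 4904960*j^11*p^9*s^3
        + 534528*j^11*p^9*s^4 + 73728*j^11*p^10*s^2 + 153600*j^11*p^10*s^3 + 20480*j^11*p^10*s^4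
        + 36068685056*j^12 + 19825511424*j^12*s + 3420135680*j^12*s^2 + 207562752*j^12*s^3
        + 3502080*j^12*s^4 + 80110430720*j^12*p + 62877260032*j^12*p*s + 14035468544*j^12*p*s^2
        + 1034618880*j^12*p*s^3 + 20336640*j^12*p*s^4 + 72679977984*j^12*p^2
        + 81422070272*j^12*p^2*s + 24032025088*j^12*p^2*s^2 + 2189569536*j^12*p^2*s^3
        + 50764800*j^12*p^2*s^4 + 34796148224*j^12*p^3 + 56474859520*j^12*p^3*s
        + 22483848704*j^12*p^3*s^2 + 2574148096*j^12*p^3*s^3 + 71239680*j^12*p^3*s^4
        + 9429860096*j^12*p^4 + 22951956480*j^12*p^4*s + 12648026368*j^12*p^4*s^2
        + 1848787968*j^12*p^4*s^3 + 61716480*j^12*p^4*s^4 + 1429522432*j^12*p^5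
        + 5575768320*j^12*p^5*s + 4421314816*j^12*p^5*s^2 + 840285184*j^12*p^5*s^3
        + 34114560*j^12*p^5*s^4 + 109926400*j^12*p^6 + 784419328*j^12*p^6*s + 953127936*j^12*p^6*s^2
        + 241468928*j^12*p^6*s^3 + 11996160*j^12*p^6*s^4 + 3176448*j^12*p^7 + 57789952*j^12*p^7*s
        + 120313856*j^12*p^7*s^2 + 42244608*j^12*p^7*s^3 + 2580480*j^12*p^7*s^4 + 1728512*j^12*p^8*s
        + 7815168*j^12*p^8*s^2 + 4071424*j^12*p^8*s^3 + 307200*j^12*p^8*s^4 + 8192*j^12*p^9*s
        + 184320*j^12*p^9*s^2 + 163840*j^12*p^9*s^3 + 15360*j^12*p^9*s^4 + 10231346176*j^13
        + 4628169728*j^13*s + 626555904*j^13*s^2 + 27884544*j^13*s^3 + 307200*j^13*s^4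
        + 19980383744*j^13*p + 13544849920*j^13*p*s + 2422163968*j^13*p*s^2 + 132342272*j^13*p*s^3
        + 1712128*j^13*p*s^4 + 15428938240*j^13*p^2 + 15792603648*j^13*p^2*s
        + 3836890112*j^13*p^2*s^2 + 262801920*j^13*p^2*s^3 + 4054016*j^13*p^2*s^4
        + 6019328512*j^13*p^3 + 9593590784*j^13*p^3*s + 3244710912*j^13*p^3*s^2
        + 284099584*j^13*p^3*s^3 + 5307392*j^13*p^3*s^4 + 1244154368*j^13*p^4
        + 3299469312*j^13*p^4*s + 1601436672*j^13*p^4*s^2 + 182378496*j^13*p^4*s^3
        + 4186112*j^13*p^4*s^4 + 127756288*j^13*p^5 + 646564352*j^13*p^5*s + 471472640*j^13*p^5*s^2
        + 71105024*j^13*p^5*s^3 + 2029568*j^13*p^5*s^4 + 4988928*j^13*p^6 + 67940864*j^13*p^6*s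
        + 80366592*j^13*p^6*s^2 + 16431616*j^13*p^6*s^3 + 588800*j^13*p^6*s^4 + 3219456*j^13*p^7*s
        + 7147520*j^13*p^7*s^2 + 2056192*j^13*p^7*s^3 + 93184*j^13*p^7*s^4 + 40960*j^13*p^8*s
        + 245760*j^13*p^8*s^2 + 106496*j^13*p^8*s^3 + 6144*j^13*p^8*s^4 + 2209739776*j^14
        + 791695360*j^14*s + 78880768*j^14*s^2 + 2285568*j^14*s^3 + 12288*j^14*s^4
        + 3723190272*j^14*p + 2124645376*j^14*p*s + 286194688*j^14*p*s^2 + 10297344*j^14*p*s^3
        + 65536*j^14*p*s^4 + 2364552192*j^14*p^2 + 2201477120*j^14*p^2*s + 416163840*j^14*p^2*s^2
        + 19073024*j^14*p^2*s^3 + 146432*j^14*p^2*s^4 + 708322304*j^14*p^3 + 1146394624*j^14*p^3*s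
        + 313421824*j^14*p^3*s^2 + 18741248*j^14*p^3*s^3 + 177152*j^14*p^3*s^4 + 99702784*j^14*p^4
        + 322981888*j^14*p^4*s + 132179968*j^14*p^4*s^2 + 10514432*j^14*p^4*s^3
        + 124928*j^14*p^4*s^4 + 5225472*j^14*p^5 + 48489472*j^14*p^5*s + 31245312*j^14*p^5*s^2
        + 3362816*j^14*p^5*s^3 + 51200*j^14*p^5*s^4 + 3457024*j^14*p^6*s + 3821568*j^14*p^6*s^2
        + 567296*j^14*p^6*s^3 + 11264*j^14*p^6*s^4 + 81920*j^14*p^7*s + 184320*j^14*p^7*s^2
        + 38912*j^14*p^7*s^3 + 1024*j^14*p^7*s^4 + 350580736*j^15 + 93474816*j^15*s
        + 6090752*j^15*s^2 + 86016*j^15*s^3 + 496508928*j^15*p + 228292608*j^15*p*s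
        + 20647936*j^15*p*s^2 + 366592*j^15*p*s^3 + 245356544*j^15*p^2 + 206600192*j^15*p^2*s
        + 27287552*j^15*p^2*s^2 + 628736*j^15*p^2*s^3 + 50483200*j^15*p^3 + 89507840*j^15*p^3*s
        + 17924096*j^15*p^3*s^2 + 552960*j^15*p^3*s^3 + 3647488*j^15*p^4 + 19740672*j^15*p^4*s
        + 6197248*j^15*p^4*s^2 + 262144*j^15*p^4*s^3 + 2097152*j^15*p^5*s + 1077248*j^15*p^5*s^2
        + 63488*j^15*p^5*s^3 + 81920*j^15*p^6*s + 73728*j^15*p^6*s^2 + 6144*j^15*p^6*s^3
        + 38469632*j^16 + 6799360*j^16*s + 217088*j^16*s^2 + 44093440*j^16*p + 14974976*j^16*p*s
        + 684032*j^16*p*s^2 + 15286272*j^16*p^2 + 11558912*j^16*p^2*s + 811008*j^16*p^2*s^2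
        + 1634304*j^16*p^3 + 3989504*j^16*p^3*s + 450560*j^16*p^3*s^2 + 647168*j^16*p^4*s
        + 118784*j^16*p^4*s^2 + 40960*j^16*p^5*s + 12288*j^16*p^5*s^2 + 2605056*j^17 + 229376*j^17*s
        + 2277376*j^17*p + 450560*j^17*p*s + 425984*j^17*p^2 + 286720*j^17*p^2*s + 73728*j^17*p^3*s
        + 8192*j^17*p^4*s + 81920*j^18 + 49152*j^18*p" (is "_ = ?P")
    unfolding N_def D_def gap_form_def ratio_lb_num_def ratio_lb_den_def rec_A_def rec_B_def rec_C_def
    by algebra
  moreover have "0 < ?P"
    using assms by (intro add_pos_nonneg add_nonneg_nonneg mult_nonneg_nonneg zero_le_power; simp)
  ultimately show ?thesis by simp
qed

lemma gap_form_pos: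
  fixes i m x y :: real
  assumes i: "1 \<le> i" "i + 1 \<le> m" and y: "0 < y"
    and lb: "ratio_lb_num i m * y \<le> ratio_lb_den i m * x"
  shows "0 < gap_form i m x y"
proof -
  define N D where "N = ratio_lb_num i m" and "D = ratio_lb_den i m"
  define s where "s = (D * x - N * y) / (D * y)"
  have D: "0 < D" unfolding D_def using i by (rule ratio_lb_den_pos)
  have s: "0 \<le> s" unfolding s_def using lb D y by (simp add: N_def D_def)
  have "D * x = y * (N + s * D)" "D * y = y * D"
    unfolding s_def using D y by (simp_all add: field_simps)
  then have "D^4 * gap_form i m x y = y^4 * gap_form i m (N + s * D) D"
    by (metis gap_form_homogeneous)
  moreover have "0 < gap_form i m (N + s * D) D"
    using gap_form_pos_shifted[of "i - 1" "m - i - 1" s] i s unfolding N_def D_def by simp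
  ultimately have "0 < D^4 * gap_form i m x y" using y by simp
  then show ?thesis using D by (simp add: zero_less_mult_iff)
qed

lemma boros_moll_gap_pos:
  assumes "1 \<le> i" "i + 1 \<le> m"
  shows "(boros_moll i (m - 1))^2 * ((boros_moll i (m + 1))^2 - boros_moll i m * boros_moll i (m + 2))
    < (boros_moll i m)^2 * ((boros_moll i m)^2 - boros_moll i (m - 1) * boros_moll i (m + 1))"
proof -
  define a b c e where "a = boros_moll i (m - 1)" and "b = boros_moll i m"
    and "c = boros_moll i (m + 1)" and "e = boros_moll i (m + 2)"
  have im: "1 \<le> real i" "real i + 1 \<le> real m" using assms by auto
  have rec1: "rec_C (real i) (real m - 1) * c
      = rec_A (real i) (real m - 1) * b - rec_B (real i) (real m - 1) * a"
    using boros_moll_recurrence[of i "m - 1"] assms unfolding a_def b_def c_def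
    by (simp add: of_nat_diff numeral_2_eq_2 Suc_diff_Suc)
  have rec2: "rec_C (real i) (real m) * e = rec_A (real i) (real m) * c - rec_B (real i) (real m) * b"
    using boros_moll_recurrence[of i m] unfolding b_def c_def e_def by simp
  have a: "0 < a" unfolding a_def using assms by (intro boros_moll_pos) simp
  have "0 < gap_form (real i) (real m) b a"
    using gap_form_pos[OF im a] boros_moll_ratio_lb[OF assms] unfolding a_def b_def by simp
  then have "0 < rec_C (real i) (real m) * (rec_C (real i) (real m - 1))^2
      * (b^2 * (b^2 - a * c) - a^2 * (c^2 - b * e))"
    by (simp add: gap_form_recurrence[OF rec1 rec2])
  moreover have "0 < rec_C (real i) (real m) * (rec_C (real i) (real m - 1))^2"
    using rec_C_pos[of "real i" "real m"] rec_C_pos[of "real i" "real m - 1"] im by simp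
  ultimately have "0 < b^2 * (b^2 - a * c) - a^2 * (c^2 - b * e)"
    by (simp add: zero_less_mult_iff)
  then show ?thesis unfolding a_def b_def c_def e_def by simp
qed

theorem theorem1p3:
  shows "(\<forall>i m. 1 \<le> i \<longrightarrow> i + 1 \<le> m \<longrightarrow>
      (boros_moll i m)^2 * ((boros_moll i m)^2 - boros_moll i (m-1) * boros_moll i (m+1))
      > (boros_moll i (m-1))^2 * ((boros_moll i (m+1))^2 - boros_moll i m * boros_moll i (m+2)))
   \<and> (\<forall>m. 1 \<le> m \<longrightarrow>
      (boros_moll 0 m)^2 * ((boros_moll 0 m)^2 - boros_moll 0 (m-1) * boros_moll 0 (m+1))
      < (boros_moll 0 (m-1))^2 * ((boros_moll 0 (m+1))^2 - boros_moll 0 m * boros_moll 0 (m+2)))"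
  using boros_moll_gap_pos boros_moll_0_gap_neg by blast

end
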